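(* Consider the following algorithm. (1) Let $S_L$ be the welfare $W$ of the allocation obtained by ranking ads by the scores $b_i q_i$. (2) Let $S_H = \sum_{j=1}^s n_j b_{(j)} q_{(j)}$ for that same allocation. (3) Compute the allocations obtained by ranking ads by the scores $b_i q_i - \lambda q_i S$ for $S=S_L$ and for $S=S_H$. (4) If these two allocations coincide, output it. (5) Otherwise let $\hat S = \frac12(S_L+S_H)$ and compute the allocation obtained by ranking by scores $b_i q_i - \lambda q_i \hat S$. (6) Let $\phi(\hat S) = \sum_{j=1}^s n_j (b_{(j)} q_{(j)} - \lambda q_{(j)} \hat S)$ for this allocation; if $\phi(\hat S) < \hat S$ set $S_H=\hat S$, otherwise set $S_L=\hat S$. (7) Repeat steps (3)–(6) until the allocations in step (4) coincide, and output the resulting allocation. Then the allocation output by this algorithm is an efficiency-maximizing allocation, i.e., it maximizes $W$ over all allocations.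
   Context: There are $s$ positions with quality scores $n_1 \ge \dots \ge n_s \ge 0$ and a set of advertisers, advertiser $i$ having quality score $q_i \ge 0$ and bid $b_i$. An allocation places distinct advertisers in positions $1,\dots,s$; write $q_{(j)}, b_{(j)}$ for the quality and bid of the ad in position $j$. Fix $\lambda>0$. The (expected social) welfare of an allocation is $W = \frac{\sum_{j=1}^s n_j b_{(j)} q_{(j)}}{1+\lambda\sum_{j=1}^s n_j q_{(j)}}$ (this corresponds to predicted click-through rates $p_j = \nu n_j q_{(j)}/(1+\lambda\sum_\ell n_\ell q_{(\ell)})$ with $\nu=1$). "Ranking ads by scores $x_i$" means sorting the advertisers in decreasing order of $x_i$ and placing the $j$-th in position $j$ for $j=1,\dots,s$. *)

theory Defs
  imports Main "HOL.Real"
begin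

(* Advertisers form a finite set A; positions are 1..s with position qualities n j.
   An allocation is a map sigma from positions {1..s} to distinct advertisers in A. *)

definition is_allocation :: "'a set \<Rightarrow> nat \<Rightarrow> (nat \<Rightarrow> 'a) \<Rightarrow> bool" where
  "is_allocation A s \<sigma> \<longleftrightarrow> inj_on \<sigma> {1..s} \<and> \<sigma> ` {1..s} \<subseteq> A"

definition welfare ::
  "nat \<Rightarrow> (nat \<Rightarrow> real) \<Rightarrow> ('a \<Rightarrow> real) \<Rightarrow> ('a \<Rightarrow> real) \<Rightarrow> real \<Rightarrow> (nat \<Rightarrow> 'a) \<Rightarrow> real" where
  "welfare s n q b lam \<sigma> =
     (\<Sum>j\<in>{1..s}. n j * b (\<sigma> j) * q (\<sigma> j)) / (1 + lam * (\<Sum>j\<in>{1..s}. n j * q (\<sigma> j)))"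

definition value_sum ::
  "nat \<Rightarrow> (nat \<Rightarrow> real) \<Rightarrow> ('a \<Rightarrow> real) \<Rightarrow> ('a \<Rightarrow> real) \<Rightarrow> (nat \<Rightarrow> 'a) \<Rightarrow> real" where
  "value_sum s n q b \<sigma> = (\<Sum>j\<in>{1..s}. n j * b (\<sigma> j) * q (\<sigma> j))"

(* sigma is an allocation obtained by ranking the advertisers by scores x:
   sorting them in decreasing order of x (ties broken arbitrarily) and placing
   the j-th one in position j, for j = 1..s. *)
definition is_ranking :: "'a set \<Rightarrow> nat \<Rightarrow> ('a \<Rightarrow> real) \<Rightarrow> (nat \<Rightarrow> 'a) \<Rightarrow> bool" where
  "is_ranking A s x \<sigma> \<longleftrightarrow> is_allocation A s \<sigma>
     \<and> (\<forall>j\<in>{1..s}. \<forall>k\<in>{1..s}. j < k \<longrightarrow> x (\<sigma> k) \<le> x (\<sigma> j))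
     \<and> (\<forall>i\<in>A - \<sigma> ` {1..s}. \<forall>j\<in>{1..s}. x i \<le> x (\<sigma> j))"

definition adj_score :: "('a \<Rightarrow> real) \<Rightarrow> ('a \<Rightarrow> real) \<Rightarrow> real \<Rightarrow> real \<Rightarrow> 'a \<Rightarrow> real" where
  "adj_score q b lam S i = b i * q i - lam * q i * S"

definition phi_val ::
  "nat \<Rightarrow> (nat \<Rightarrow> real) \<Rightarrow> ('a \<Rightarrow> real) \<Rightarrow> ('a \<Rightarrow> real) \<Rightarrow> real \<Rightarrow> real \<Rightarrow> (nat \<Rightarrow> 'a) \<Rightarrow> real" where
  "phi_val s n q b lam S \<sigma> = (\<Sum>j\<in>{1..s}. n j * (b (\<sigma> j) * q (\<sigma> j) - lam * q (\<sigma> j) * S))"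

(* SL SH out : starting the loop (steps 3-7) with current values
   SL, SH, some run of the algorithm terminates and outputs out.
   Ties in the rankings may be broken arbitrarily (every tie-breaking is allowed). *)
inductive bisect_loop for A s n q b lam where
  stop: "\<lbrakk> is_ranking A s (adj_score q b lam SL) \<sigma>L;
           is_ranking A s (adj_score q b lam SH) \<sigma>H;
           \<forall>j\<in>{1..s}. \<sigma>L j = \<sigma>H j \<rbrakk>
         \<Longrightarrow> bisect_loop A s n q b lam SL SH \<sigma>L"
| step: "\<lbrakk> is_ranking A s (adj_score q b lam SL) \<sigma>L;
           is_ranking A s (adj_score q b lam SH) \<sigma>H;
           \<not> (\<forall>j\<in>{1..s}. \<sigma>L j = \<sigma>H j);
           Sh = (SL + SH) / 2;
           is_ranking A s (adj_score q b lam Sh) \<tau>;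
           if phi_val s n q b lam Sh \<tau> < Sh
             then bisect_loop A s n q b lam SL Sh out
             else bisect_loop A s n q b lam Sh SH out \<rbrakk>
         \<Longrightarrow> bisect_loop A s n q b lam SL SH out"

definition algorithm_output ::
  "'a set \<Rightarrow> nat \<Rightarrow> (nat \<Rightarrow> real) \<Rightarrow> ('a \<Rightarrow> real) \<Rightarrow> ('a \<Rightarrow> real) \<Rightarrow> real \<Rightarrow> (nat \<Rightarrow> 'a) \<Rightarrow> bool" where
  "algorithm_output A s n q b lam out \<longleftrightarrow>
     (\<exists>\<sigma>0. is_ranking A s (\<lambda>i. b i * q i) \<sigma>0
        \<and> bisect_loop A s n q b lam (welfare s n q b lam \<sigma>0) (value_sum s n q b \<sigma>0) out)"

end

theory Submission
  imports Defs
begin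

text \<open>
  For an allocation \<open>\<pi>\<close> write \<open>V \<pi>\<close> for the value sum and \<open>Q \<pi> = \<Sum>j. n j * q (\<pi> j)\<close>,
  so that \<open>W \<pi> = V \<pi> / (1 + lam * Q \<pi>)\<close> and \<open>\<phi>\<^sub>\<pi>(S) = V \<pi> - lam * S * Q \<pi>\<close>.
  Then \<open>S \<le> W \<pi>\<close> iff \<open>S \<le> \<phi>\<^sub>\<pi>(S)\<close>, and by the rearrangement inequality ranking by the
  scores \<open>b i * q i - lam * q i * S\<close> maximises \<open>\<phi>\<^sub>\<pi>(S)\<close>. Hence the sign of \<open>\<phi>(S) - S\<close> for a
  ranked allocation tells whether the optimal welfare is at least \<open>S\<close>, so the bisection keeps
  the optimum in \<open>[S\<^sub>L, S\<^sub>H]\<close>; the initial interval is valid because \<open>W \<le> V\<close>.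
  When the same allocation \<open>\<sigma>\<close> is ranked at both ends, \<open>\<phi>\<^sub>\<sigma> - \<phi>\<^sub>\<pi>\<close> is affine in \<open>S\<close> and
  non-negative at both ends, hence on the whole interval, which makes \<open>\<sigma>\<close> optimal.
\<close>

lemma antitone_weighted_sum_ge:
  fixes d n :: "nat \<Rightarrow> 'b::linordered_ring"
  assumes prefix: "\<forall>k\<in>{1..s}. 0 \<le> (\<Sum>j=1..k. d j)"
    and antitone: "\<forall>j\<in>{1..s}. \<forall>k\<in>{1..s}. j \<le> k \<longrightarrow> n k \<le> n j"
    and "m \<le> s"
  shows "n m * (\<Sum>j=1..m. d j) \<le> (\<Sum>j=1..m. n j * d j)"
  using \<open>m \<le> s\<close>
proof (induction m)
  case 0
  then show ?case by simp
next
  case (Suc m)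
  have "n (Suc m) * (\<Sum>j=1..m. d j) \<le> n m * (\<Sum>j=1..m. d j)"
  proof (cases "m = 0")
    case False
    then have "0 \<le> (\<Sum>j=1..m. d j)" "n (Suc m) \<le> n m"
      using prefix antitone Suc.prems by auto
    then show ?thesis by (simp add: mult_right_mono)
  qed simp
  with Suc show ?case by (simp add: distrib_left)
qed

lemma antitone_weighted_sum_nonneg:
  fixes d n :: "nat \<Rightarrow> 'b::linordered_ring"
  assumes prefix: "\<forall>k\<in>{1..s}. 0 \<le> (\<Sum>j=1..k. d j)"
    and antitone: "\<forall>j\<in>{1..s}. \<forall>k\<in>{1..s}. j \<le> k \<longrightarrow> n k \<le> n j"
    and nonneg: "\<forall>j\<in>{1..s}. 0 \<le> n j"
  shows "0 \<le> (\<Sum>j=1..s. n j * d j)"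
proof (cases "s = 0")
  case False
  then have "0 \<le> n s * (\<Sum>j=1..s. d j)" using prefix nonneg by auto
  also have "\<dots> \<le> (\<Sum>j=1..s. n j * d j)"
    using antitone_weighted_sum_ge[OF prefix antitone] by simp
  finally show ?thesis .
qed simp

lemma sum_le_sum_if_card_eq:
  fixes x :: "'a \<Rightarrow> 'b::ordered_comm_monoid_add"
  assumes "finite T" "finite U" "card T = card U"
    and le: "\<forall>t\<in>T - U. \<forall>u\<in>U - T. x t \<le> x u"
  shows "sum x T \<le> sum x U"
proof -
  have "card (T - U) = card (U - T)"
    using assms(1-3) by (metis Int_commute card_Diff_subset_Int finite_Int)
  then obtain f where f: "bij_betw f (T - U) (U - T)"
    using finite_same_card_bij assms(1,2) by blast
  have "sum x (T - U) \<le> sum (x \<circ> f) (T - U)"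
    using le f by (intro sum_mono) (auto simp: bij_betw_def)
  also have "\<dots> = sum x (U - T)"
    using sum.reindex_bij_betw[OF f] by simp
  finally have "sum x (T \<inter> U) + sum x (T - U) \<le> sum x (T \<inter> U) + sum x (U - T)"
    by (rule add_left_mono)
  moreover have "sum x T = sum x (T \<inter> U) + sum x (T - U)"
    "sum x U = sum x (T \<inter> U) + sum x (U - T)"
    using sum.Int_Diff assms(1,2) by (metis Int_commute)+
  ultimately show ?thesis by simp
qed

lemma ranking_prefix_sum_ge:
  fixes x :: "'a \<Rightarrow> real"
  assumes rank: "is_ranking A s x \<sigma>" and alloc: "is_allocation A s \<pi>" and "k \<le> s"
  shows "(\<Sum>j=1..k. x (\<pi> j)) \<le> (\<Sum>j=1..k. x (\<sigma> j))"
proof -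
  have "{1..k} \<subseteq> {1..s}" using \<open>k \<le> s\<close> by auto
  then have inj: "inj_on \<sigma> {1..k}" "inj_on \<pi> {1..k}" and \<pi>A: "\<pi> ` {1..k} \<subseteq> A"
    using rank alloc unfolding is_ranking_def is_allocation_def by (auto intro: inj_on_subset)
  have "sum x (\<pi> ` {1..k}) \<le> sum x (\<sigma> ` {1..k})"
  proof (rule sum_le_sum_if_card_eq)
    show "card (\<pi> ` {1..k}) = card (\<sigma> ` {1..k})"
      using card_image[OF inj(1)] card_image[OF inj(2)] by simp
    show "\<forall>t\<in>\<pi> ` {1..k} - \<sigma> ` {1..k}. \<forall>u\<in>\<sigma> ` {1..k} - \<pi> ` {1..k}. x t \<le> x u"
    proof (intro ballI)
      fix t u
      assume t: "t \<in> \<pi> ` {1..k} - \<sigma> ` {1..k}" and u: "u \<in> \<sigma> ` {1..k} - \<pi> ` {1..k}"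
      then obtain j where j: "j \<in> {1..k}" "u = \<sigma> j" by auto
      show "x t \<le> x u"
      proof (cases "t \<in> \<sigma> ` {1..s}")
        case True
        then obtain m where m: "m \<in> {1..s}" "t = \<sigma> m" by auto
        with t have "k < m" by (metis DiffD2 atLeastAtMost_iff image_eqI not_le)
        with m show ?thesis using rank j \<open>k \<le> s\<close> unfolding is_ranking_def by auto
      next
        case False
        then show ?thesis using rank j t \<pi>A \<open>k \<le> s\<close> unfolding is_ranking_def by auto
      qed
    qed
  qed auto
  then show ?thesis by (simp only: sum.reindex[OF inj(1)] sum.reindex[OF inj(2)] comp_def)
qed

lemma ranking_maximizes_weighted_sum:
  fixes x :: "'a \<Rightarrow> real" and n :: "nat \<Rightarrow> real"
  assumes "is_ranking A s x \<sigma>" "is_allocation A s \<pi>"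
    and antitone: "\<forall>j\<in>{1..s}. \<forall>k\<in>{1..s}. j \<le> k \<longrightarrow> n k \<le> n j"
    and nonneg: "\<forall>j\<in>{1..s}. 0 \<le> n j"
  shows "(\<Sum>j=1..s. n j * x (\<pi> j)) \<le> (\<Sum>j=1..s. n j * x (\<sigma> j))"
proof -
  have "\<forall>k\<in>{1..s}. 0 \<le> (\<Sum>j=1..k. x (\<sigma> j) - x (\<pi> j))"
    using ranking_prefix_sum_ge[OF assms(1,2)] by (auto simp: sum_subtractf)
  from antitone_weighted_sum_nonneg[OF this antitone nonneg] show ?thesis
    by (simp add: right_diff_distrib sum_subtractf)
qed

lemma affine_nonneg_between:
  fixes a c SL SH S :: "'b::linordered_ring"
  assumes "0 \<le> a - SL * c" "0 \<le> a - SH * c" "SL \<le> S" "S \<le> SH"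
  shows "0 \<le> a - S * c"
proof (cases "0 \<le> c")
  case True
  then have "S * c \<le> SH * c" using assms by (simp add: mult_right_mono)
  then show ?thesis using assms by (simp add: algebra_simps)
next
  case False
  then have "S * c \<le> SL * c" using assms by (simp add: mult_right_mono_neg)
  then show ?thesis using assms by (simp add: algebra_simps)
qed

lemma is_ranking_is_allocation: "is_ranking A s x \<sigma> \<Longrightarrow> is_allocation A s \<sigma>"
  by (simp add: is_ranking_def)

lemma is_ranking_cong:
  assumes "\<forall>j\<in>{1..s}. \<sigma> j = \<sigma>' j"
  shows "is_ranking A s x \<sigma> \<longleftrightarrow> is_ranking A s x \<sigma>'"
proof -
  have "\<sigma> ` {1..s} = \<sigma>' ` {1..s}"
    by (rule image_cong) (use assms in auto)
  moreover have "inj_on \<sigma> {1..s} \<longleftrightarrow> inj_on \<sigma>' {1..s}"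
    by (rule inj_on_cong) (use assms in auto)
  ultimately
  show ?thesis using assms by (simp add: is_ranking_def is_allocation_def)
qed

locale ad_auction =
  fixes A :: "'a set" and s :: nat and n :: "nat \<Rightarrow> real"
    and q b :: "'a \<Rightarrow> real" and lam :: real
  assumes lam_pos: "lam > 0"
    and n_antitone: "\<forall>j\<in>{1..s}. \<forall>k\<in>{1..s}. j \<le> k \<longrightarrow> n k \<le> n j"
    and n_nonneg: "\<forall>j\<in>{1..s}. n j \<ge> 0"
    and q_nonneg: "\<forall>i\<in>A. q i \<ge> 0"
    and b_nonneg: "\<forall>i\<in>A. b i \<ge> 0"
begin

abbreviation W :: "(nat \<Rightarrow> 'a) \<Rightarrow> real" where
  "W \<equiv> welfare s n q b lam"

abbreviation V :: "(nat \<Rightarrow> 'a) \<Rightarrow> real" where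
  "V \<equiv> value_sum s n q b"

abbreviation \<phi> :: "real \<Rightarrow> (nat \<Rightarrow> 'a) \<Rightarrow> real" where
  "\<phi> \<equiv> phi_val s n q b lam"

definition quality_sum :: "(nat \<Rightarrow> 'a) \<Rightarrow> real" where
  "quality_sum \<pi> = (\<Sum>j\<in>{1..s}. n j * q (\<pi> j))"

definition optimal :: "(nat \<Rightarrow> 'a) \<Rightarrow> bool" where
  "optimal \<sigma> \<longleftrightarrow> is_allocation A s \<sigma> \<and> (\<forall>\<pi>. is_allocation A s \<pi> \<longrightarrow> W \<pi> \<le> W \<sigma>)"

definition brackets_optimum :: "real \<Rightarrow> real \<Rightarrow> bool" where
  "brackets_optimum SL SH \<longleftrightarrow>
     (\<exists>\<rho>. is_allocation A s \<rho> \<and> SL \<le> W \<rho>) \<and> (\<forall>\<pi>. is_allocation A s \<pi> \<longrightarrow> W \<pi> \<le> SH)"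

lemma phi_val_eq: "\<phi> S \<pi> = V \<pi> - lam * S * quality_sum \<pi>"
  by (simp add: phi_val_def value_sum_def quality_sum_def right_diff_distrib sum_subtractf
      sum_distrib_left mult_ac)

lemma welfare_eq: "W \<pi> = V \<pi> / (1 + lam * quality_sum \<pi>)"
  by (simp add: welfare_def value_sum_def quality_sum_def)

lemma quality_sum_nonneg: "is_allocation A s \<pi> \<Longrightarrow> 0 \<le> quality_sum \<pi>"
  unfolding quality_sum_def is_allocation_def using n_nonneg q_nonneg
  by (intro sum_nonneg) (simp add: image_subset_iff)

lemma value_sum_nonneg: "is_allocation A s \<pi> \<Longrightarrow> 0 \<le> V \<pi>"
  unfolding value_sum_def is_allocation_def using n_nonneg q_nonneg b_nonneg
  by (intro sum_nonneg) (simp add: image_subset_iff)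

lemma le_welfare_iff_le_phi_val:
  assumes "is_allocation A s \<pi>"
  shows "S \<le> W \<pi> \<longleftrightarrow> S \<le> \<phi> S \<pi>"
proof -
  have "0 < 1 + lam * quality_sum \<pi>"
    using quality_sum_nonneg[OF assms] lam_pos by (simp add: add_pos_nonneg)
  then have "S \<le> W \<pi> \<longleftrightarrow> S * (1 + lam * quality_sum \<pi>) \<le> V \<pi>"
    by (simp add: welfare_eq le_divide_eq)
  then show ?thesis by (simp add: phi_val_eq algebra_simps)
qed

lemma welfare_le_value_sum:
  assumes "is_allocation A s \<pi>"
  shows "W \<pi> \<le> V \<pi>"
proof -
  have "1 \<le> 1 + lam * quality_sum \<pi>"
    using quality_sum_nonneg[OF assms] lam_pos by simp
  with value_sum_nonneg[OF assms] show ?thesis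
    by (simp add: welfare_eq divide_le_eq mult_le_cancel_left1 mult.commute)
qed

lemma ranking_maximizes_phi_val:
  assumes "is_ranking A s (adj_score q b lam S) \<sigma>" "is_allocation A s \<pi>"
  shows "\<phi> S \<pi> \<le> \<phi> S \<sigma>"
  using ranking_maximizes_weighted_sum[OF assms n_antitone n_nonneg]
  by (simp add: phi_val_def adj_score_def)

lemma ranking_maximizes_value_sum:
  assumes "is_ranking A s (\<lambda>i. b i * q i) \<sigma>" "is_allocation A s \<pi>"
  shows "V \<pi> \<le> V \<sigma>"
  using ranking_maximizes_weighted_sum[OF assms n_antitone n_nonneg]
  by (simp add: value_sum_def mult_ac)

lemma ex_le_welfare_iff_le_phi_val:
  assumes "is_ranking A s (adj_score q b lam S) \<tau>"
  shows "(\<exists>\<rho>. is_allocation A s \<rho> \<and> S \<le> W \<rho>) \<longleftrightarrow> S \<le> \<phi> S \<tau>"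
proof
  assume "\<exists>\<rho>. is_allocation A s \<rho> \<and> S \<le> W \<rho>"
  then obtain \<rho> where "is_allocation A s \<rho>" "S \<le> \<phi> S \<rho>"
    using le_welfare_iff_le_phi_val by blast
  then show "S \<le> \<phi> S \<tau>"
    using ranking_maximizes_phi_val[OF assms] by (meson order_trans)
next
  assume "S \<le> \<phi> S \<tau>"
  moreover have "is_allocation A s \<tau>" using assms by (rule is_ranking_is_allocation)
  ultimately show "\<exists>\<rho>. is_allocation A s \<rho> \<and> S \<le> W \<rho>"
    using le_welfare_iff_le_phi_val by blast
qed

lemma brackets_optimum_initial:
  assumes "is_ranking A s (\<lambda>i. b i * q i) \<sigma>"
  shows "brackets_optimum (W \<sigma>) (V \<sigma>)"
  using assms is_ranking_is_allocation welfare_le_value_sum ranking_maximizes_value_sum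
  unfolding brackets_optimum_def by (meson order_refl order_trans)

lemma brackets_optimum_bisect:
  assumes "brackets_optimum SL SH" "is_ranking A s (adj_score q b lam S) \<tau>"
  shows "if \<phi> S \<tau> < S then brackets_optimum SL S else brackets_optimum S SH"
  using assms ex_le_welfare_iff_le_phi_val[OF assms(2)]
  unfolding brackets_optimum_def by (auto simp: not_less)

lemma common_ranking_optimal:
  assumes bracket: "brackets_optimum SL SH"
    and rankL: "is_ranking A s (adj_score q b lam SL) \<sigma>"
    and rankH: "is_ranking A s (adj_score q b lam SH) \<sigma>"
  shows "optimal \<sigma>"
proof -
  have \<sigma>: "is_allocation A s \<sigma>" using rankL by (rule is_ranking_is_allocation)
  have "W \<pi> \<le> W \<sigma>" if \<pi>: "is_allocation A s \<pi>" for \<pi>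
  proof (cases "W \<pi> \<le> SL")
    case True
    have "SL \<le> \<phi> SL \<sigma>"
      using bracket ex_le_welfare_iff_le_phi_val[OF rankL] unfolding brackets_optimum_def
      by blast
    then have "SL \<le> W \<sigma>" using le_welfare_iff_le_phi_val[OF \<sigma>] by blast
    with True show ?thesis by linarith
  next
    case False
    define w where "w = W \<pi>"
    have "0 \<le> (V \<sigma> - V \<pi>) - w * (lam * (quality_sum \<sigma> - quality_sum \<pi>))"
    proof (rule affine_nonneg_between)
      show "0 \<le> (V \<sigma> - V \<pi>) - SL * (lam * (quality_sum \<sigma> - quality_sum \<pi>))"
        using ranking_maximizes_phi_val[OF rankL \<pi>] unfolding phi_val_eq
        by (simp add: algebra_simps)
      show "0 \<le> (V \<sigma> - V \<pi>) - SH * (lam * (quality_sum \<sigma> - quality_sum \<pi>))"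
        using ranking_maximizes_phi_val[OF rankH \<pi>] unfolding phi_val_eq
        by (simp add: algebra_simps)
      show "SL \<le> w" using False by (simp add: w_def)
      show "w \<le> SH" using bracket \<pi> unfolding brackets_optimum_def w_def by blast
    qed
    then have "\<phi> w \<pi> \<le> \<phi> w \<sigma>" unfolding phi_val_eq by (simp add: algebra_simps)
    moreover have "w \<le> \<phi> w \<pi>" using le_welfare_iff_le_phi_val[OF \<pi>] w_def by blast
    ultimately have "w \<le> \<phi> w \<sigma>" by linarith
    then show ?thesis using le_welfare_iff_le_phi_val[OF \<sigma>] w_def by blast
  qed
  with \<sigma> show ?thesis by (simp add: optimal_def)
qed

lemma bisect_loop_optimal:
  assumes "bisect_loop A s n q b lam SL SH out" "brackets_optimum SL SH"
  shows "optimal out"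
  using assms
proof (induction rule: bisect_loop.induct)
  case (stop SL \<sigma>L SH \<sigma>H)
  have "is_ranking A s (adj_score q b lam SH) \<sigma>L"
    using stop.hyps(2) is_ranking_cong[OF stop.hyps(3)] by simp
  with stop.prems stop.hyps(1) show ?case by (rule common_ranking_optimal)
next
  case (step SL \<sigma>L SH \<sigma>H Sh \<tau> out)
  from step.IH brackets_optimum_bisect[OF step.prems step.hyps(5)] show ?case
    by (simp split: if_splits)
qed

end

theorem theorem3:
  fixes A :: "'a set" and s :: nat and n :: "nat \<Rightarrow> real"
    and q b :: "'a \<Rightarrow> real" and lam :: real and out :: "nat \<Rightarrow> 'a"
  assumes "finite A"
    and "lam > 0"
    and "\<forall>j\<in>{1..s}. \<forall>k\<in>{1..s}. j \<le> k \<longrightarrow> n k \<le> n j"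
    and "\<forall>j\<in>{1..s}. n j \<ge> 0"
    and "\<forall>i\<in>A. q i \<ge> 0"
    and "\<forall>i\<in>A. b i \<ge> 0"
    and "algorithm_output A s n q b lam out"
  shows "is_allocation A s out
    \<and> (\<forall>\<sigma>. is_allocation A s \<sigma> \<longrightarrow> welfare s n q b lam \<sigma> \<le> welfare s n q b lam out)"
proof -
  interpret ad_auction A s n q b lam
    using assms(2-6) by unfold_locales
  obtain \<sigma>0 where rank: "is_ranking A s (\<lambda>i. b i * q i) \<sigma>0"
    and loop: "bisect_loop A s n q b lam (W \<sigma>0) (V \<sigma>0) out"
    using assms(7) unfolding algorithm_output_def by blast
  have "optimal out"
    using bisect_loop_optimal[OF loop brackets_optimum_initial[OF rank]] .
  then show ?thesis by (simp add: optimal_def)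
qed

end
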